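(* Let $\Omega\subset\mathbb{R}^N$ be a bounded open connected set, $h\in C(\Omega)$, and $\Theta(x):=\{(r,A)\in\mathbb{R}\times\mathcal{S}(N): G(A)\ge h(x)\}$, where $G(A):=\sum_{i=1}^N\arctan(\lambda_i(A))$. Suppose there exist $k\in\{1,\dots,N-1\}$ and a sequence $(x_n)_{n\in\mathbb N}\subset\Omega$ converging to $x_0\in\Omega$ such that $h(x_0)=\theta_k:=(N-2k)\frac{\pi}{2}$ and either $h(x_n)>\theta_k$ for every $n$, or $h(x_n)<\theta_k$ for every $n$. Then $\Theta$ is not Hausdorff continuous on $\Omega$.
   Context: $\mathcal{S}(N)$: real symmetric $N\times N$ matrices; $\lambda_1(A)\le\dots\le\lambda_N(A)$ its eigenvalues. On $\mathbb{R}\times\mathcal{S}(N)$ use the norm $\|(r,A)\|=\max\{|r|,\max_i|\lambda_i(A)|\}$ and the Hausdorff distance $d_{\mathcal H}(\Phi,\Psi)=\inf\{\varepsilon>0:\Phi\subset N_\varepsilon(\Psi),\Psi\subset N_\varepsilon(\Phi)\}\in[0,\infty]$ on closed sets. $\Theta$ is Hausdorff continuous on $\Omega$ if for all $x\in\Omega$, $\eta>0$ there is $\delta>0$ with $d_{\mathcal H}(\Theta(x),\Theta(y))<\eta$ whenever $y\in\Omega$, $|x-y|<\delta$. *)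

theory Defs
  imports "HOL-Analysis.Analysis" "HOL-Computational_Algebra.Polynomial" "HOL-Library.Multiset"
begin

definition symmetric_mat :: "real^'n^'n \<Rightarrow> bool" where
  "symmetric_mat A \<longleftrightarrow> transpose A = A"

definition charpoly :: "real^'n^'n \<Rightarrow> real poly" where
  "charpoly A = det (\<chi> i j. (if i = j then [:0, 1:] else 0) - [:A $ i $ j:])"

definition eigvals_mset :: "real^'n^'n \<Rightarrow> real multiset" where
  "eigvals_mset A = Abs_multiset (\<lambda>a. order a (charpoly A))"

text \<open>The eigenvalues in increasing order: lambda_1(A) <= ... <= lambda_N(A)
  (list index 0 corresponds to lambda_1).\<close>
definition eigvals :: "real^'n^'n \<Rightarrow> real list" where
  "eigvals A = sorted_list_of_multiset (eigvals_mset A)"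

definition Gfun :: "real^'n^'n \<Rightarrow> real" where
  "Gfun A = (\<Sum>i<CARD('n). arctan (eigvals A ! i))"

definition pnorm :: "real \<times> (real^'n^'n) \<Rightarrow> real" where
  "pnorm p = max \<bar>fst p\<bar> (Max {\<bar>eigvals (snd p) ! i\<bar> | i. i < CARD('n)})"

definition nbhd :: "real \<Rightarrow> (real \<times> (real^'n^'n)) set \<Rightarrow> (real \<times> (real^'n^'n)) set" where
  "nbhd \<epsilon> \<Psi> = {p. \<exists>q\<in>\<Psi>. pnorm (p - q) < \<epsilon>}"

text \<open>Hausdorff distance, valued in [0, infinity] (Inf of the empty set is infinity).\<close>
definition hdist :: "(real \<times> (real^'n^'n)) set \<Rightarrow> (real \<times> (real^'n^'n)) set \<Rightarrow> ereal" where
  "hdist \<Phi> \<Psi> = Inf {ereal \<epsilon> | \<epsilon>. \<epsilon> > 0 \<and> \<Phi> \<subseteq> nbhd \<epsilon> \<Psi> \<and> \<Psi> \<subseteq> nbhd \<epsilon> \<Phi>}"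

definition hausdorff_continuous_on ::
  "(real^'n) set \<Rightarrow> (real^'n \<Rightarrow> (real \<times> (real^'n^'n)) set) \<Rightarrow> bool" where
  "hausdorff_continuous_on \<Omega> \<Theta> \<longleftrightarrow>
     (\<forall>x\<in>\<Omega>. \<forall>\<eta>>0. \<exists>\<delta>>0. \<forall>y\<in>\<Omega>. norm (x - y) < \<delta> \<longrightarrow> hdist (\<Theta> x) (\<Theta> y) < ereal \<eta>)"

definition Theta :: "(real^'n \<Rightarrow> real) \<Rightarrow> real^'n \<Rightarrow> (real \<times> (real^'n^'n)) set" where
  "Theta h x = {(r, A). symmetric_mat A \<and> Gfun A \<ge> h x}"

end

theory Submission
  imports Defs
begin

text \<open>
  Let \<open>\<theta> = (N - 2k) \<pi>/2\<close> and split the coordinates into a set \<open>K\<close> of \<open>k\<close> indices and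
  its complement. The matrix \<open>A = diag(-s on K, t off K)\<close> has
  \<open>G(A) = (N - k) arctan t - k arctan s\<close>, which tends to \<open>\<theta>\<close> as \<open>s, t \<rightarrow> \<infinity>\<close>. If
  all eigenvalues of \<open>A - B\<close> lie in \<open>(-\<epsilon>, \<epsilon>)\<close>, then by a min-max (dimension counting)
  argument \<open>B\<close> has at least \<open>k\<close> eigenvalues \<open>\<le> \<epsilon> - s\<close> and all of them are
  \<open>\<le> t + \<epsilon>\<close>, so \<open>G(B) \<le> (N - k) arctan (t + \<epsilon>) - k arctan (s - \<epsilon>)\<close>. Letting
  \<open>s\<close> and \<open>t\<close> grow in a suitable order shows that the superlevel sets \<open>{G \<ge> \<theta>}\<close>
  and \<open>{G \<ge> c}\<close> are at infinite Hausdorff distance whenever \<open>c \<noteq> \<theta>\<close>. Hence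
  \<open>d\<^sub>H(\<Theta>(x\<^sub>0), \<Theta>(x\<^sub>n)) = \<infinity>\<close> for every \<open>n\<close>.
\<close>

section \<open>Spectral theorem for real symmetric matrices\<close>

lemma symmetric_mat_inner_commute:
  fixes M :: "real^'n^'n"
  assumes "symmetric_mat M"
  shows "(M *v x) \<bullet> y = x \<bullet> (M *v y)"
  by (metis assms dot_lmul_matrix symmetric_mat_def vector_transpose_matrix)

lemma symmetric_mat_diff: "symmetric_mat A \<Longrightarrow> symmetric_mat B \<Longrightarrow> symmetric_mat (A - B)"
  unfolding symmetric_mat_def transpose_def by (simp add: vec_eq_iff)

lemma nonpos_if_mult_le_square_mult:
  fixes a b :: real
  assumes "\<And>t. t * a \<le> t\<^sup>2 * b"
  shows "a \<le> 0"
proof (rule ccontr)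
  assume "\<not> a \<le> 0"
  define t where "t = a / (\<bar>b\<bar> + 1)"
  have t: "t > 0" using \<open>\<not> a \<le> 0\<close> by (simp add: t_def)
  have "t * a \<le> t\<^sup>2 * \<bar>b\<bar>"
    using assms[of t] mult_left_mono[OF abs_ge_self[of b], of "t\<^sup>2"] by simp
  hence "t * a \<le> t * (t * \<bar>b\<bar>)" by (simp add: power2_eq_square mult.assoc)
  hence "a \<le> t * \<bar>b\<bar>" using t by simp
  also have "\<dots> < a" using \<open>\<not> a \<le> 0\<close> by (simp add: t_def field_simps)
  finally show False by simp
qed

lemma eigenvector_if_quadratic_form_max:
  fixes M :: "real^'n^'n"
  assumes sym: "symmetric_mat M" and S: "subspace S" and inv: "\<And>x. x \<in> S \<Longrightarrow> M *v x \<in> S"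
    and v: "v \<in> S" "norm v = 1"
    and max: "\<And>y. y \<in> S \<Longrightarrow> y \<bullet> (M *v y) \<le> (v \<bullet> (M *v v)) * (norm y)\<^sup>2"
  shows "M *v v = (v \<bullet> (M *v v)) *\<^sub>R v"
proof -
  define \<mu> where "\<mu> = v \<bullet> (M *v v)"
  define r where "r = M *v v - \<mu> *\<^sub>R v"
  define q where "q = r \<bullet> (M *v r)"
  have vv: "v \<bullet> v = 1" using v by (simp add: dot_square_norm)
  have rv: "r \<bullet> v = 0"
    using vv by (simp add: r_def \<mu>_def inner_diff_left inner_diff_right inner_commute)
  have rMv: "r \<bullet> (M *v v) = (norm r)\<^sup>2"
    using rv by (simp add: r_def inner_diff_right inner_diff_left power2_norm_eq_inner)
  have vMr: "v \<bullet> (M *v r) = (norm r)\<^sup>2"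
    using rMv symmetric_mat_inner_commute[OF sym, of v r] by (simp add: inner_commute)
  \<comment> \<open>Expanding the maximality of \<open>v\<close> along the line \<open>v + t r\<close> gives a
      first-order term \<open>2 t |r|\<^sup>2\<close> that a quadratic term must dominate.\<close>
  have "t * (2 * (norm r)\<^sup>2) \<le> t\<^sup>2 * (\<mu> * (norm r)\<^sup>2 - q)" for t
  proof -
    have "v + t *\<^sub>R r \<in> S"
      using S v inv by (simp add: r_def subspace_add subspace_diff subspace_scale)
    from max[OF this] have
      "(v + t *\<^sub>R r) \<bullet> (M *v (v + t *\<^sub>R r)) \<le> \<mu> * (norm (v + t *\<^sub>R r))\<^sup>2"
      by (simp add: \<mu>_def)
    moreover have "(v + t *\<^sub>R r) \<bullet> (M *v (v + t *\<^sub>R r)) = \<mu> + 2 * t * (norm r)\<^sup>2 + t\<^sup>2 * q"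
      using vMr rMv unfolding \<mu>_def q_def
      by (simp add: matrix_vector_right_distrib matrix_vector_mult_scaleR inner_add_left
          inner_add_right power2_eq_square algebra_simps)
    moreover have "(norm (v + t *\<^sub>R r))\<^sup>2 = 1 + t\<^sup>2 * (norm r)\<^sup>2"
      using vv rv unfolding power2_norm_eq_inner
      by (simp add: inner_add_left inner_add_right inner_commute power2_eq_square)
    ultimately show ?thesis by (simp add: algebra_simps)
  qed
  hence "2 * (norm r)\<^sup>2 \<le> 0" by (rule nonpos_if_mult_le_square_mult)
  hence "r = 0" by simp
  thus ?thesis by (simp add: r_def \<mu>_def)
qed

lemma symmetric_mat_eigenvector_in_invariant_subspace:
  fixes M :: "real^'n^'n"
  assumes sym: "symmetric_mat M" and S: "subspace S" and inv: "\<And>x. x \<in> S \<Longrightarrow> M *v x \<in> S"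
    and nontrivial: "S \<noteq> {0}"
  obtains v where "v \<in> S" "norm v = 1" "M *v v = (v \<bullet> (M *v v)) *\<^sub>R v"
proof -
  define K where "K = S \<inter> sphere 0 1"
  have "compact K"
    unfolding K_def by (simp add: S closed_Int_compact closed_subspace)
  obtain x where x: "x \<in> S" "x \<noteq> 0" using nontrivial S subspace_0 by blast
  hence "x /\<^sub>R norm x \<in> K" by (simp add: K_def S subspace_scale)
  hence "K \<noteq> {}" by blast
  moreover have "continuous_on K (\<lambda>x. x \<bullet> (M *v x))"
    by (intro continuous_intros linear_continuous_on matrix_vector_mul_linear)
  ultimately obtain v where v: "v \<in> K" and vmax: "\<And>y. y \<in> K \<Longrightarrow> y \<bullet> (M *v y) \<le> v \<bullet> (M *v v)"
    using continuous_attains_sup[OF \<open>compact K\<close>] by blast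
  have "y \<bullet> (M *v y) \<le> (v \<bullet> (M *v v)) * (norm y)\<^sup>2" if "y \<in> S" for y
  proof (cases "y = 0")
    case False
    have "y /\<^sub>R norm y \<in> K" using that False by (simp add: K_def S subspace_scale)
    from vmax[OF this] have "(y \<bullet> (M *v y)) / (norm y)\<^sup>2 \<le> v \<bullet> (M *v v)"
      by (simp add: matrix_vector_mult_scaleR power2_eq_square divide_simps)
    thus ?thesis using False by (simp add: divide_simps mult.commute)
  qed simp
  with v show thesis
    by (intro that eigenvector_if_quadratic_form_max[OF sym S inv]) (auto simp: K_def)
qed

definition orthonormal_eigenbasis :: "real^'n^'n \<Rightarrow> (real^'n) set \<Rightarrow> bool" where
  "orthonormal_eigenbasis M U \<longleftrightarrow> pairwise orthogonal U \<and> span U = UNIV \<and>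
     (\<forall>u\<in>U. norm u = 1 \<and> M *v u = (u \<bullet> (M *v u)) *\<^sub>R u)"

lemma invariant_subspace_has_orthonormal_eigenbasis:
  fixes M :: "real^'n^'n"
  assumes sym: "symmetric_mat M"
  shows "subspace S \<Longrightarrow> (\<And>x. x \<in> S \<Longrightarrow> M *v x \<in> S) \<Longrightarrow>
    \<exists>U\<subseteq>S. pairwise orthogonal U \<and> span U = S \<and>
      (\<forall>u\<in>U. norm u = 1 \<and> M *v u = (u \<bullet> (M *v u)) *\<^sub>R u)"
proof (induction "dim S" arbitrary: S rule: less_induct)
  case less
  show ?case
  proof (cases "S = {0}")
    case True
    then show ?thesis by (intro exI[of _ "{}"]) auto
  next
    case False
    obtain v where v: "v \<in> S" "norm v = 1" and ev: "M *v v = (v \<bullet> (M *v v)) *\<^sub>R v"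
      using symmetric_mat_eigenvector_in_invariant_subspace[OF sym less.prems False] by blast
    have vv: "v \<bullet> v = 1" using v by (simp add: dot_square_norm)
    define S' where "S' = S \<inter> {x. v \<bullet> x = 0}"
    have "subspace S'"
      unfolding S'_def by (intro subspace_inter less.prems(1) subspace_hyperplane)
    moreover have "M *v x \<in> S'" if "x \<in> S'" for x
    proof -
      have "v \<bullet> (M *v x) = (v \<bullet> (M *v v)) * (v \<bullet> x)"
        by (metis ev inner_scaleR_left sym symmetric_mat_inner_commute)
      thus ?thesis using that less.prems(2) by (simp add: S'_def)
    qed
    moreover have "dim S' < dim S"
    proof (rule dim_psubset)
      have "v \<notin> S'" using vv by (simp add: S'_def)
      hence "S' \<subset> S" using v(1) unfolding S'_def by blast
      thus "span S' \<subset> span S"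
        using \<open>subspace S'\<close> less.prems(1) by (metis span_eq_iff)
    qed
    ultimately obtain U' where U': "U' \<subseteq> S'" "pairwise orthogonal U'" "span U' = S'"
      "\<forall>u\<in>U'. norm u = 1 \<and> M *v u = (u \<bullet> (M *v u)) *\<^sub>R u"
      using less.hyps by blast
    have "span (insert v U') = S"
    proof
      show "span (insert v U') \<subseteq> S"
        using v U'(1) less.prems(1) by (intro span_minimal) (auto simp: S'_def)
      show "S \<subseteq> span (insert v U')"
      proof
        fix x assume "x \<in> S"
        hence "x - (v \<bullet> x) *\<^sub>R v \<in> span U'"
          using v vv less.prems(1) U'(3)
          by (simp add: S'_def subspace_diff subspace_scale inner_diff_right)
        hence "(x - (v \<bullet> x) *\<^sub>R v) + (v \<bullet> x) *\<^sub>R v \<in> span (insert v U')"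
          by (meson span_add span_base span_mono span_scale insertI1 subset_insertI subsetD)
        thus "x \<in> span (insert v U')" by simp
      qed
    qed
    moreover have "pairwise orthogonal (insert v U')"
      using U'(1,2) by (auto simp: pairwise_insert S'_def orthogonal_def inner_commute)
    ultimately show ?thesis
      using v ev U'(1,4) by (intro exI[of _ "insert v U'"]) (auto simp: S'_def)
  qed
qed

lemma symmetric_mat_has_orthonormal_eigenbasis:
  fixes M :: "real^'n^'n"
  assumes "symmetric_mat M"
  obtains U where "orthonormal_eigenbasis M U"
  using invariant_subspace_has_orthonormal_eigenbasis[OF assms, of UNIV]
  unfolding orthonormal_eigenbasis_def by auto

lemma
  fixes M :: "real^'n^'n"
  assumes "orthonormal_eigenbasis M U"
  shows orthonormal_eigenbasis_independent: "independent U"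
    and orthonormal_eigenbasis_finite: "finite U"
    and orthonormal_eigenbasis_card: "card U = CARD('n)"
proof -
  have "0 \<notin> U" using assms unfolding orthonormal_eigenbasis_def by force
  thus ind: "independent U"
    using assms unfolding orthonormal_eigenbasis_def by (intro pairwise_orthogonal_independent) auto
  thus "finite U" by (rule independent_imp_finite)
  have "card U = dim (span U)" using dim_span_eq_card_independent[OF ind] by simp
  also have "\<dots> = CARD('n)" using assms unfolding orthonormal_eigenbasis_def by simp
  finally show "card U = CARD('n)" .
qed

lemma orthonormal_eigenbasis_inner:
  assumes "orthonormal_eigenbasis M U" "u \<in> U" "w \<in> U"
  shows "u \<bullet> w = (if u = w then 1 else 0)"
  using assms unfolding orthonormal_eigenbasis_def pairwise_def orthogonal_def
  by (auto simp: dot_square_norm)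

lemma orthonormal_eigenbasis_inner_expand:
  fixes M :: "real^'n^'n"
  assumes "orthonormal_eigenbasis M U"
  shows "x \<bullet> y = (\<Sum>u\<in>U. (x \<bullet> u) * (y \<bullet> u))"
proof -
  have "y = (\<Sum>u\<in>U. (y \<bullet> u) *\<^sub>R u)"
    using assms orthonormal_eigenbasis_finite[OF assms]
    by (intro orthonormal_basis_expand[symmetric]) (auto simp: orthonormal_eigenbasis_def)
  hence "x \<bullet> y = x \<bullet> (\<Sum>u\<in>U. (y \<bullet> u) *\<^sub>R u)" by simp
  thus ?thesis by (simp add: inner_sum_right mult.commute)
qed

lemma orthonormal_eigenbasis_norm_square:
  fixes M :: "real^'n^'n"
  assumes "orthonormal_eigenbasis M U"
  shows "(norm x)\<^sup>2 = (\<Sum>u\<in>U. (x \<bullet> u)\<^sup>2)"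
  using orthonormal_eigenbasis_inner_expand[OF assms, of x x]
  by (simp add: dot_square_norm power2_eq_square)

lemma orthonormal_eigenbasis_quadratic_form:
  fixes M :: "real^'n^'n"
  assumes B: "orthonormal_eigenbasis M U" and sym: "symmetric_mat M"
  shows "x \<bullet> (M *v x) = (\<Sum>u\<in>U. (u \<bullet> (M *v u)) * (x \<bullet> u)\<^sup>2)"
proof -
  have "(x \<bullet> u) * ((M *v x) \<bullet> u) = (u \<bullet> (M *v u)) * (x \<bullet> u)\<^sup>2" if "u \<in> U" for u
  proof -
    have "(M *v x) \<bullet> u = x \<bullet> (M *v u)" by (rule symmetric_mat_inner_commute[OF sym])
    also have "\<dots> = (u \<bullet> (M *v u)) * (x \<bullet> u)"
      using B that unfolding orthonormal_eigenbasis_def by (metis inner_scaleR_right)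
    finally show ?thesis by (simp add: power2_eq_square)
  qed
  hence "(\<Sum>u\<in>U. (x \<bullet> u) * ((M *v x) \<bullet> u)) = (\<Sum>u\<in>U. (u \<bullet> (M *v u)) * (x \<bullet> u)\<^sup>2)"
    by (rule sum.cong[OF refl])
  thus ?thesis by (simp only: orthonormal_eigenbasis_inner_expand[OF B, of x, symmetric])
qed

section \<open>Eigenvalues via an orthonormal eigenbasis\<close>

definition diagm :: "('n \<Rightarrow> real) \<Rightarrow> real^'n^'n" where
  "diagm a = (\<chi> i j. if i = j then a i else 0)"

lemma matrix_mult_diagm: "(A ** diagm d) $ i $ j = A $ i $ j * d j"
  by (simp add: matrix_matrix_mult_def diagm_def if_distrib[of "\<lambda>x. y * x" for y] cong: if_cong)

lemma matrix_vector_mult_diagm: "diagm a *v x = (\<chi> i. a i * x $ i)"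
  by (simp add: vec_eq_iff matrix_vector_mult_def diagm_def if_distrib[of "\<lambda>y. y * z" for z]
      cong: if_cong)

lemma symmetric_mat_diagm: "symmetric_mat (diagm a)"
  unfolding symmetric_mat_def diagm_def transpose_def by (simp add: vec_eq_iff)

lemma quadratic_form_diagm: "x \<bullet> (diagm a *v x) = (\<Sum>i\<in>UNIV. a i * (x $ i)\<^sup>2)"
  unfolding matrix_vector_mult_diagm inner_vec_def by (simp add: power2_eq_square algebra_simps)

lemma orthonormal_eigenbasis_diagm: "orthonormal_eigenbasis (diagm a) Basis"
proof -
  have "diagm a *v axis i 1 = a i *\<^sub>R axis i 1" for i
    by (simp add: matrix_vector_mult_diagm axis_def vec_eq_iff)
  hence "diagm a *v u = (u \<bullet> (diagm a *v u)) *\<^sub>R u" if "u \<in> Basis" for u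
    using that by (auto simp: Basis_vec_def inner_axis_axis)
  thus ?thesis
    by (simp add: orthonormal_eigenbasis_def pairwise_def orthogonal_def inner_not_same_Basis)
qed

lemma mat_mult_vector: "mat c *v v = c *\<^sub>R (v :: real^'n)"
  by (simp add: vec_eq_iff matrix_vector_mult_def mat_def if_distrib[of "\<lambda>x. x * y" for y]
      cong: if_cong)

lemma poly_charpoly: "poly (charpoly M) x = det (mat x - M)"
  unfolding charpoly_def det_def mat_def
  by (simp add: poly_sum poly_prod of_int_poly if_distrib[of "\<lambda>p. poly p x"] cong: if_cong)

lemma det_mat_minus_orthonormal_eigenbasis:
  fixes M :: "real^'n^'n"
  assumes B: "orthonormal_eigenbasis M U"
  shows "det (mat x - M) = (\<Prod>u\<in>U. x - u \<bullet> (M *v u))"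
proof -
  define \<mu> where "\<mu> u = u \<bullet> (M *v u)" for u
  obtain \<sigma> :: "'n \<Rightarrow> real^'n" where \<sigma>: "bij_betw \<sigma> UNIV U"
    using finite_same_card_bij[OF finite orthonormal_eigenbasis_finite[OF B]]
      orthonormal_eigenbasis_card[OF B] by auto
  have \<sigma>U: "\<sigma> j \<in> U" for j using \<sigma> by (auto simp: bij_betw_def)
  define P where "P = (\<chi> i j. \<sigma> j $ i)"
  have "column j P = \<sigma> j" for j by (simp add: column_def P_def)
  moreover have "norm (\<sigma> j) = 1" for j using B \<sigma>U by (simp add: orthonormal_eigenbasis_def)
  moreover have "orthogonal (\<sigma> i) (\<sigma> j)" if "i \<noteq> j" for i j
  proof -
    have "pairwise orthogonal U" using B by (simp add: orthonormal_eigenbasis_def)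
    moreover have "\<sigma> i \<noteq> \<sigma> j" using \<sigma> that by (simp add: bij_betw_def inj_eq)
    ultimately show ?thesis using \<sigma>U by (simp add: pairwise_def)
  qed
  ultimately have "orthogonal_matrix P" by (simp add: orthogonal_matrix_orthonormal_columns)
  hence "det P \<noteq> 0" using det_orthogonal_matrix by fastforce
  have ev: "M *v \<sigma> j = \<mu> (\<sigma> j) *\<^sub>R \<sigma> j" for j
    using B \<sigma>U unfolding orthonormal_eigenbasis_def \<mu>_def by auto
  have "((mat x - M) ** P) $ i $ j = (P ** diagm (\<lambda>j. x - \<mu> (\<sigma> j))) $ i $ j" for i j
  proof -
    have "((mat x - M) ** P) $ i $ j = ((mat x - M) *v \<sigma> j) $ i"
      by (simp add: P_def matrix_matrix_mult_def matrix_vector_mult_def)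
    also have "\<dots> = \<sigma> j $ i * (x - \<mu> (\<sigma> j))"
      using ev[of j] by (simp add: matrix_vector_mult_diff_rdistrib mat_mult_vector algebra_simps)
    also have "\<dots> = (P ** diagm (\<lambda>j. x - \<mu> (\<sigma> j))) $ i $ j"
      by (simp add: matrix_mult_diagm P_def)
    finally show ?thesis .
  qed
  hence "(mat x - M) ** P = P ** diagm (\<lambda>j. x - \<mu> (\<sigma> j))" by (simp add: vec_eq_iff)
  hence "det (mat x - M) = det (diagm (\<lambda>j. x - \<mu> (\<sigma> j)))"
    using \<open>det P \<noteq> 0\<close> by (metis det_mul mult.commute mult_left_cancel)
  also have "\<dots> = (\<Prod>j\<in>UNIV. x - \<mu> (\<sigma> j))" unfolding diagm_def by (subst det_diagonal) auto
  also have "\<dots> = (\<Prod>u\<in>U. x - \<mu> u)" using prod.reindex_bij_betw[OF \<sigma>] by simp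
  finally show ?thesis unfolding \<mu>_def .
qed

lemma charpoly_orthonormal_eigenbasis:
  fixes M :: "real^'n^'n"
  assumes "orthonormal_eigenbasis M U"
  shows "charpoly M = (\<Prod>u\<in>U. [:- (u \<bullet> (M *v u)), 1:])"
proof -
  have "poly (charpoly M) = poly (\<Prod>u\<in>U. [:- (u \<bullet> (M *v u)), 1:])"
    by (rule ext) (simp add: poly_charpoly poly_prod det_mat_minus_orthonormal_eigenbasis[OF assms])
  thus ?thesis by (simp add: poly_eq_poly_eq_iff)
qed

lemma order_linear_factor: "order a [:- b, 1:] = (if a = b then 1 else 0)"
proof (cases "a = b")
  case True
  then show ?thesis using order_power_n_n[of b 1] by simp
next
  case False
  then show ?thesis by (simp add: order_0I)
qed

lemma order_prod_linear_factors:
  fixes f :: "'a \<Rightarrow> real"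
  assumes "finite U"
  shows "order a (\<Prod>u\<in>U. [:- f u, 1:]) = count (image_mset f (mset_set U)) a"
  using assms
proof (induction U rule: finite_induct)
  case (insert x F)
  have "(\<Prod>u\<in>F. [:- f u, 1:]) \<noteq> 0" using insert.hyps(1) by (simp add: prod_zero_iff)
  hence "order a ([:- f x, 1:] * (\<Prod>u\<in>F. [:- f u, 1:])) =
      order a [:- f x, 1:] + order a (\<Prod>u\<in>F. [:- f u, 1:])"
    by (intro order_mult) (simp only: mult_eq_0_iff pCons_eq_0_iff, simp)
  thus ?case using insert by (simp add: order_linear_factor)
qed simp

lemma
  fixes M :: "real^'n^'n"
  assumes B: "orthonormal_eigenbasis M U"
  shows mset_eigvals_orthonormal_eigenbasis:
      "mset (eigvals M) = image_mset (\<lambda>u. u \<bullet> (M *v u)) (mset_set U)"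
    and length_eigvals_orthonormal_eigenbasis: "length (eigvals M) = CARD('n)"
    and set_eigvals_orthonormal_eigenbasis: "set (eigvals M) = (\<lambda>u. u \<bullet> (M *v u)) ` U"
    and Gfun_orthonormal_eigenbasis: "Gfun M = (\<Sum>u\<in>U. arctan (u \<bullet> (M *v u)))"
proof -
  have fin: "finite U" and card: "card U = CARD('n)"
    using orthonormal_eigenbasis_finite[OF B] orthonormal_eigenbasis_card[OF B] .
  have "eigvals_mset M = image_mset (\<lambda>u. u \<bullet> (M *v u)) (mset_set U)"
    using order_prod_linear_factors[OF fin]
    by (simp add: eigvals_mset_def charpoly_orthonormal_eigenbasis[OF B] count_inverse)
  thus m: "mset (eigvals M) = image_mset (\<lambda>u. u \<bullet> (M *v u)) (mset_set U)"
    by (simp add: eigvals_def)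
  show l: "length (eigvals M) = CARD('n)"
    using arg_cong[OF m, of size] fin card by simp
  show "set (eigvals M) = (\<lambda>u. u \<bullet> (M *v u)) ` U"
    using arg_cong[OF m, of set_mset] fin by simp
  have "Gfun M = sum_list (map arctan (eigvals M))"
    unfolding Gfun_def sum_list_sum_nth using l by (simp add: atLeast0LessThan)
  also have "\<dots> = sum_mset (image_mset arctan (mset (eigvals M)))"
    by (simp add: sum_mset_sum_list[symmetric])
  also have "\<dots> = (\<Sum>u\<in>U. arctan (u \<bullet> (M *v u)))"
    unfolding m by (simp add: sum_unfold_sum_mset image_mset.compositionality o_def)
  finally show "Gfun M = (\<Sum>u\<in>U. arctan (u \<bullet> (M *v u)))" .
qed

lemma Gfun_diagm: "Gfun (diagm a) = (\<Sum>i\<in>UNIV. arctan (a i))"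
proof -
  have "Basis = range (\<lambda>i. axis i (1::real) :: real^'n)" by (auto simp: Basis_vec_def)
  hence "Gfun (diagm a) = (\<Sum>u\<in>range (\<lambda>i. axis i 1). arctan (u \<bullet> (diagm a *v u)))"
    by (metis Gfun_orthonormal_eigenbasis orthonormal_eigenbasis_diagm)
  also have "\<dots> = (\<Sum>i\<in>UNIV. arctan (a i))"
    by (subst sum.reindex) (auto simp: inj_on_def axis_eq_axis matrix_vector_mult_diagm inner_axis')
  finally show ?thesis .
qed

lemma Gfun_split_diagm:
  fixes K :: "'n::finite set"
  assumes "card K = k"
  shows "Gfun (diagm (\<lambda>i. if i \<in> K then - s else t)) =
    (real CARD('n) - real k) * arctan t - real k * arctan s"
proof -
  have "Gfun (diagm (\<lambda>i. if i \<in> K then - s else t)) =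
      (\<Sum>i\<in>UNIV. if i \<in> K then - arctan s else arctan t)"
    unfolding Gfun_diagm by (rule sum.cong) (auto simp: arctan_minus)
  also have "\<dots> = real (card K) * (- arctan s) + real (card (- K)) * arctan t"
    by (simp add: sum.If_cases Compl_eq_Diff_UNIV)
  also have "card (- K) = CARD('n) - card K"
    by (simp add: Compl_eq_Diff_UNIV card_Diff_subset)
  finally show ?thesis using assms card_mono[of UNIV K] by (simp add: algebra_simps of_nat_diff)
qed

section \<open>Eigenvalues of matrices close to a diagonal matrix\<close>

lemma norm_square_vec: "(norm x)\<^sup>2 = (\<Sum>i\<in>UNIV. (x $ i)\<^sup>2)" for x :: "real^'n"
  unfolding power2_norm_eq_inner inner_vec_def by (simp add: power2_eq_square)

lemma quadratic_form_ge_if_eigvals_ge: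
  fixes D :: "real^'n^'n"
  assumes sym: "symmetric_mat D" and ge: "\<And>i. i < CARD('n) \<Longrightarrow> c \<le> eigvals D ! i"
  shows "c * (norm x)\<^sup>2 \<le> x \<bullet> (D *v x)"
proof -
  obtain U where U: "orthonormal_eigenbasis D U"
    using symmetric_mat_has_orthonormal_eigenbasis[OF sym] .
  have "c \<le> u \<bullet> (D *v u)" if "u \<in> U" for u
  proof -
    have "u \<bullet> (D *v u) \<in> set (eigvals D)"
      using set_eigvals_orthonormal_eigenbasis[OF U] that by simp
    then obtain i where "i < CARD('n)" "eigvals D ! i = u \<bullet> (D *v u)"
      using length_eigvals_orthonormal_eigenbasis[OF U] by (auto simp: in_set_conv_nth)
    thus ?thesis using ge by metis
  qed
  hence "(\<Sum>u\<in>U. c * (x \<bullet> u)\<^sup>2) \<le> (\<Sum>u\<in>U. (u \<bullet> (D *v u)) * (x \<bullet> u)\<^sup>2)"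
    by (intro sum_mono mult_right_mono) auto
  thus ?thesis
    by (simp add: orthonormal_eigenbasis_norm_square[OF U, of x] sum_distrib_left
        orthonormal_eigenbasis_quadratic_form[OF U sym, of x])
qed

lemma quadratic_form_gt_on_span_of_eigenvectors:
  fixes B :: "real^'n^'n"
  assumes sym: "symmetric_mat B" and U: "orthonormal_eigenbasis B U" and "I \<subseteq> U"
    and gt: "\<And>u. u \<in> I \<Longrightarrow> c < u \<bullet> (B *v u)" and x: "x \<in> span I" "x \<noteq> 0"
  shows "c * (norm x)\<^sup>2 < x \<bullet> (B *v x)"
proof -
  have outside: "x \<bullet> u = 0" if "u \<in> U - I" for u
  proof -
    have "orthogonal u y" if "y \<in> I" for y
    proof -
      have "u \<noteq> y" "y \<in> U" using \<open>u \<in> U - I\<close> \<open>I \<subseteq> U\<close> that by auto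
      thus ?thesis using U \<open>u \<in> U - I\<close> by (auto simp: orthonormal_eigenbasis_def pairwise_def)
    qed
    hence "orthogonal u x" using orthogonal_to_span x(1) by blast
    thus ?thesis by (simp add: orthogonal_def inner_commute)
  qed
  have "\<exists>u\<in>U. x \<bullet> u \<noteq> 0"
  proof (rule ccontr)
    assume "\<not> (\<exists>u\<in>U. x \<bullet> u \<noteq> 0)"
    hence "(norm x)\<^sup>2 = 0" using orthonormal_eigenbasis_norm_square[OF U, of x] by simp
    thus False using x(2) by simp
  qed
  then obtain u where u: "u \<in> U" "x \<bullet> u \<noteq> 0" by blast
  have "0 < (\<Sum>v\<in>U. (v \<bullet> (B *v v) - c) * (x \<bullet> v)\<^sup>2)"
  proof (rule sum_pos2)
    show "0 < (u \<bullet> (B *v u) - c) * (x \<bullet> u)\<^sup>2"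
      using u outside gt by fastforce
    show "0 \<le> (v \<bullet> (B *v v) - c) * (x \<bullet> v)\<^sup>2" if "v \<in> U" for v
      using that outside gt[of v] by (cases "v \<in> I") auto
  qed (use u orthonormal_eigenbasis_finite[OF U] in auto)
  also have "\<dots> = x \<bullet> (B *v x) - c * (norm x)\<^sup>2"
    by (simp add: orthonormal_eigenbasis_quadratic_form[OF U sym, of x] left_diff_distrib
        orthonormal_eigenbasis_norm_square[OF U, of x] sum_subtractf sum_distrib_left)
  finally show ?thesis by simp
qed

lemma dim_le_card_eigenvalues_le:
  fixes B :: "real^'n^'n"
  assumes sym: "symmetric_mat B" and U: "orthonormal_eigenbasis B U" and "subspace V"
    and le: "\<And>x. x \<in> V \<Longrightarrow> x \<bullet> (B *v x) \<le> c * (norm x)\<^sup>2"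
  shows "dim V \<le> card {u\<in>U. u \<bullet> (B *v u) \<le> c}"
proof (rule ccontr)
  define L where "L = {u\<in>U. u \<bullet> (B *v u) \<le> c}"
  define I where "I = U - L"
  assume "\<not> dim V \<le> card {u\<in>U. u \<bullet> (B *v u) \<le> c}"
  hence "CARD('n) < dim V + card I"
    using orthonormal_eigenbasis_finite[OF U] orthonormal_eigenbasis_card[OF U]
    by (simp add: I_def L_def card_Diff_subset)
  moreover have "dim (span I) = card I"
    using independent_mono[OF orthonormal_eigenbasis_independent[OF U], of I]
    by (simp add: I_def dim_eq_card_independent)
  moreover have "dim {x + y |x y. x \<in> V \<and> y \<in> span I} + dim (V \<inter> span I) = dim V + dim (span I)"
    using \<open>subspace V\<close> by (intro dim_sums_Int) auto
  moreover have "dim {x + y |x y. x \<in> V \<and> y \<in> span I} \<le> CARD('n)"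
    by (rule dim_subset_UNIV_cart)
  ultimately have "dim (V \<inter> span I) \<noteq> 0" by linarith
  then obtain x where "x \<in> V" "x \<in> span I" "x \<noteq> 0" by (auto simp: dim_eq_0)
  moreover have "c < u \<bullet> (B *v u)" if "u \<in> I" for u
    using that by (auto simp: I_def L_def)
  ultimately have "c * (norm x)\<^sup>2 < x \<bullet> (B *v x)"
    by (intro quadratic_form_gt_on_span_of_eigenvectors[OF sym U]) (auto simp: I_def)
  with le[OF \<open>x \<in> V\<close>] show False by simp
qed

lemma Gfun_le_if_eigenvalue_bounds:
  fixes B :: "real^'n^'n"
  assumes U: "orthonormal_eigenbasis B U"
    and upper: "\<And>u. u \<in> U \<Longrightarrow> u \<bullet> (B *v u) \<le> b"
    and low: "k \<le> card {u\<in>U. u \<bullet> (B *v u) \<le> a}" and "a \<le> b"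
  shows "Gfun B \<le> (real CARD('n) - real k) * arctan b + real k * arctan a"
proof -
  define L where "L = {u\<in>U. u \<bullet> (B *v u) \<le> a}"
  have fin: "finite U" and "L \<subseteq> U" and card: "card U = CARD('n)"
    using orthonormal_eigenbasis_finite[OF U] orthonormal_eigenbasis_card[OF U] by (auto simp: L_def)
  have "Gfun B = (\<Sum>u\<in>U - L. arctan (u \<bullet> (B *v u))) + (\<Sum>u\<in>L. arctan (u \<bullet> (B *v u)))"
    using sum.subset_diff[OF \<open>L \<subseteq> U\<close> fin] by (simp add: Gfun_orthonormal_eigenbasis[OF U])
  also have "\<dots> \<le> real (card (U - L)) * arctan b + real (card L) * arctan a"
    using upper by (intro add_mono sum_bounded_above) (auto simp: L_def arctan_le_iff)
  also have "\<dots> = (real CARD('n) - real (card L)) * arctan b + real (card L) * arctan a"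
    using fin \<open>L \<subseteq> U\<close> card card_mono[OF fin \<open>L \<subseteq> U\<close>]
    by (simp add: card_Diff_subset finite_subset of_nat_diff)
  also have "\<dots> \<le> (real CARD('n) - real k) * arctan b + real k * arctan a"
  proof -
    have "(real (card L) - real k) * (arctan a - arctan b) \<le> 0"
      using low \<open>a \<le> b\<close> by (intro mult_nonneg_nonpos) (auto simp: L_def arctan_le_iff)
    thus ?thesis by (simp add: algebra_simps)
  qed
  finally show ?thesis .
qed

lemma Gfun_le_near_split_diagm:
  fixes K :: "'n::finite set" and B :: "real^'n^'n"
  assumes "card K = k" and "- s \<le> t" and B: "symmetric_mat B"
    and close: "\<And>i. i < CARD('n) \<Longrightarrow>
      \<bar>eigvals (diagm (\<lambda>i. if i \<in> K then - s else t) - B) ! i\<bar> < \<epsilon>"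
  shows "Gfun B \<le> (real CARD('n) - real k) * arctan (t + \<epsilon>) - real k * arctan (s - \<epsilon>)"
proof -
  define a where "a = (\<lambda>i. if i \<in> K then - s else t)"
  define D where "D = diagm a - B"
  have D_ge: "- \<epsilon> * (norm x)\<^sup>2 \<le> x \<bullet> (D *v x)" for x
  proof (rule quadratic_form_ge_if_eigvals_ge)
    show "symmetric_mat D" by (simp add: D_def symmetric_mat_diff symmetric_mat_diagm B)
    show "- \<epsilon> \<le> eigvals D ! i" if "i < CARD('n)" for i
      using close[OF that] by (simp add: D_def a_def abs_less_iff)
  qed
  have B_form: "x \<bullet> (B *v x) = x \<bullet> (diagm a *v x) - x \<bullet> (D *v x)" for x
    by (simp add: D_def matrix_vector_mult_diff_rdistrib inner_diff_right)
  obtain U where U: "orthonormal_eigenbasis B U"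
    using symmetric_mat_has_orthonormal_eigenbasis[OF B] .
  have "u \<bullet> (B *v u) \<le> t + \<epsilon>" if "u \<in> U" for u
  proof -
    have "u \<bullet> (diagm a *v u) \<le> t * (norm u)\<^sup>2"
      unfolding quadratic_form_diagm norm_square_vec sum_distrib_left
      using \<open>- s \<le> t\<close> by (intro sum_mono mult_right_mono) (auto simp: a_def)
    moreover have "norm u = 1" using U that by (simp add: orthonormal_eigenbasis_def)
    ultimately show ?thesis using B_form[of u] D_ge[of u] by simp
  qed
  moreover have "k \<le> card {u\<in>U. u \<bullet> (B *v u) \<le> \<epsilon> - s}"
  proof -
    define V where "V = {x :: real^'n. \<forall>i. i \<notin> K \<longrightarrow> x $ i = 0}"
    have V: "subspace V" by (auto simp: V_def subspace_def)
    have "dim V = k"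
      using dim_substandard_cart[where 'a=real, of K] \<open>card K = k\<close> by (simp add: V_def dim_vec_eq)
    moreover have "x \<bullet> (B *v x) \<le> (\<epsilon> - s) * (norm x)\<^sup>2" if "x \<in> V" for x
    proof -
      have "x \<bullet> (diagm a *v x) = - s * (norm x)\<^sup>2"
        using that unfolding quadratic_form_diagm norm_square_vec sum_distrib_left
        by (intro sum.cong) (auto simp: V_def a_def)
      thus ?thesis using B_form[of x] D_ge[of x] by (simp add: algebra_simps)
    qed
    ultimately show ?thesis using dim_le_card_eigenvalues_le[OF B U V] by simp
  qed
  moreover have "\<epsilon> - s \<le> t + \<epsilon>" using \<open>- s \<le> t\<close> by simp
  ultimately have "Gfun B \<le> (real CARD('n) - real k) * arctan (t + \<epsilon>) + real k * arctan (\<epsilon> - s)"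
    by (rule Gfun_le_if_eigenvalue_bounds[OF U])
  also have "arctan (\<epsilon> - s) = - arctan (s - \<epsilon>)"
    using arctan_minus[of "s - \<epsilon>"] by simp
  finally show ?thesis by simp
qed

section \<open>Superlevel sets of G\<close>

definition Gfun_superlevel :: "real \<Rightarrow> (real \<times> (real^'n^'n)) set" where
  "Gfun_superlevel c = {(r, A). symmetric_mat A \<and> c \<le> Gfun A}"

lemma Theta_eq_Gfun_superlevel: "Theta h x = Gfun_superlevel (h x)"
  by (simp add: Theta_def Gfun_superlevel_def)

lemma abs_eigvals_le_pnorm:
  fixes A :: "real^'n^'n"
  assumes "i < CARD('n)"
  shows "\<bar>eigvals A ! i\<bar> \<le> pnorm (r, A)"
proof -
  have "finite {\<bar>eigvals A ! i\<bar> | i. i < CARD('n)}" by simp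
  hence "\<bar>eigvals A ! i\<bar> \<le> Max {\<bar>eigvals A ! i\<bar> | i. i < CARD('n)}"
    using assms by (intro Max_ge) auto
  thus ?thesis by (simp add: pnorm_def)
qed

lemma not_in_nbhd_Gfun_superlevel:
  fixes A :: "real^'n^'n"
  assumes "\<And>B. symmetric_mat B \<Longrightarrow> (\<And>i. i < CARD('n) \<Longrightarrow> \<bar>eigvals (A - B) ! i\<bar> < \<epsilon>) \<Longrightarrow> Gfun B < c"
  shows "(r, A) \<notin> nbhd \<epsilon> (Gfun_superlevel c)"
proof
  assume "(r, A) \<in> nbhd \<epsilon> (Gfun_superlevel c)"
  then obtain r' B where B: "symmetric_mat B" "c \<le> Gfun B" and near: "pnorm ((r, A) - (r', B)) < \<epsilon>"
    by (auto simp: nbhd_def Gfun_superlevel_def)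
  have "\<bar>eigvals (A - B) ! i\<bar> < \<epsilon>" if "i < CARD('n)" for i
    using abs_eigvals_le_pnorm[OF that, of "A - B" "r - r'"] near by simp
  with assms[OF B(1)] B(2) show False by fastforce
qed

lemma arctan_tail_bound:
  assumes "0 < d"
  obtains y0 where "\<And>y. y0 \<le> y \<Longrightarrow> pi / 2 - arctan y < d"
proof -
  have "eventually (\<lambda>y. pi / 2 - d < arctan y) at_top"
    using order_tendstoD(1)[OF tendsto_arctan_at_top] assms by simp
  then obtain y0 where y0: "\<And>y. y0 \<le> y \<Longrightarrow> pi / 2 - d < arctan y"
    by (auto simp: eventually_at_top_linorder)
  show thesis
  proof (rule that)
    show "pi / 2 - arctan y < d" if "y0 \<le> y" for y using y0[OF that] by simp
  qed
qed

lemma Gfun_superlevel_not_subset_nbhd_above: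
  assumes "0 < k" "k < CARD('n)" "0 < \<epsilon>" and "(real CARD('n) - 2 * real k) * pi / 2 < c"
  shows "\<not> Gfun_superlevel ((real CARD('n) - 2 * real k) * pi / 2) \<subseteq>
    nbhd \<epsilon> (Gfun_superlevel c :: (real \<times> (real^'n^'n)) set)"
proof -
  define \<theta> where "\<theta> = (real CARD('n) - 2 * real k) * pi / 2"
  define m where "m = real CARD('n) - real k"
  have "1 \<le> m" "1 \<le> real k" using assms by (auto simp: m_def)
  have \<theta>_eq: "\<theta> = m * (pi / 2) - real k * (pi / 2)" by (simp add: m_def \<theta>_def field_simps)
  obtain K :: "'n set" where K: "card K = k"
    using obtain_subset_with_card_n[of k "UNIV :: 'n set"] assms(2) by auto
  obtain y0 where y0: "\<And>y. y0 \<le> y \<Longrightarrow> pi / 2 - arctan y < (c - \<theta>) / real k"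
    using arctan_tail_bound[of "(c - \<theta>) / real k"] assms(1,4) by (auto simp: \<theta>_def)
  define s where "s = \<bar>y0\<bar> + \<epsilon>"
  have "0 < real k * (pi / 2 - arctan s) / m"
    using \<open>1 \<le> m\<close> \<open>1 \<le> real k\<close> arctan_ubound[of s] by simp
  then obtain y1 where y1: "\<And>y. y1 \<le> y \<Longrightarrow> pi / 2 - arctan y < real k * (pi / 2 - arctan s) / m"
    using arctan_tail_bound by blast
  define t where "t = \<bar>y1\<bar>"
  define A where "A = diagm (\<lambda>i. if i \<in> K then - s else t)"
  \<comment> \<open>\<open>s\<close> makes the \<open>\<epsilon>\<close>-neighbourhood of \<open>A\<close> stay below level \<open>c\<close>;
      \<open>t\<close>, chosen after \<open>s\<close>, lifts \<open>A\<close> itself to level \<open>\<theta>\<close>.\<close>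
  have "m * (pi / 2 - arctan t) < real k * (pi / 2 - arctan s)"
    using y1[of t] \<open>1 \<le> m\<close> by (simp add: t_def pos_less_divide_eq mult.commute)
  hence "\<theta> \<le> Gfun A"
    using \<theta>_eq by (simp add: A_def Gfun_split_diagm[OF K] m_def algebra_simps)
  hence "(0, A) \<in> Gfun_superlevel \<theta>"
    by (simp add: Gfun_superlevel_def A_def symmetric_mat_diagm)
  moreover have "(0, A) \<notin> nbhd \<epsilon> (Gfun_superlevel c)"
  proof (rule not_in_nbhd_Gfun_superlevel)
    fix B :: "real^'n^'n"
    assume "symmetric_mat B" "\<And>i. i < CARD('n) \<Longrightarrow> \<bar>eigvals (A - B) ! i\<bar> < \<epsilon>"
    hence "Gfun B \<le> m * arctan (t + \<epsilon>) - real k * arctan (s - \<epsilon>)"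
      unfolding m_def using assms(3)
      by (intro Gfun_le_near_split_diagm[OF K]) (auto simp: A_def s_def t_def)
    moreover have "real k * (pi / 2 - arctan (s - \<epsilon>)) < c - \<theta>"
      using y0[of "s - \<epsilon>"] \<open>1 \<le> real k\<close> by (simp add: s_def pos_less_divide_eq mult.commute)
    moreover have "m * arctan (t + \<epsilon>) < m * (pi / 2)"
      using \<open>1 \<le> m\<close> arctan_ubound[of "t + \<epsilon>"] by simp
    ultimately show "Gfun B < c" using \<theta>_eq by (simp add: algebra_simps)
  qed
  ultimately show ?thesis unfolding \<theta>_def by blast
qed

lemma Gfun_superlevel_not_subset_nbhd_below:
  assumes "0 < k" "k < CARD('n)" "0 < \<epsilon>" and "c < (real CARD('n) - 2 * real k) * pi / 2"
  shows "\<not> Gfun_superlevel c \<subseteq>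
    nbhd \<epsilon> (Gfun_superlevel ((real CARD('n) - 2 * real k) * pi / 2) :: (real \<times> (real^'n^'n)) set)"
proof -
  define \<theta> where "\<theta> = (real CARD('n) - 2 * real k) * pi / 2"
  define m where "m = real CARD('n) - real k"
  have "1 \<le> m" "1 \<le> real k" using assms by (auto simp: m_def)
  have \<theta>_eq: "\<theta> = m * (pi / 2) - real k * (pi / 2)" by (simp add: m_def \<theta>_def field_simps)
  obtain K :: "'n set" where K: "card K = k"
    using obtain_subset_with_card_n[of k "UNIV :: 'n set"] assms(2) by auto
  obtain y1 where y1: "\<And>y. y1 \<le> y \<Longrightarrow> pi / 2 - arctan y < (\<theta> - c) / m"
    using arctan_tail_bound[of "(\<theta> - c) / m"] \<open>1 \<le> m\<close> assms(4) by (auto simp: \<theta>_def)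
  define t where "t = \<bar>y1\<bar>"
  have "0 < m * (pi / 2 - arctan (t + \<epsilon>)) / real k"
    using \<open>1 \<le> m\<close> \<open>1 \<le> real k\<close> arctan_ubound[of "t + \<epsilon>"] by simp
  then obtain y0 where
    y0: "\<And>y. y0 \<le> y \<Longrightarrow> pi / 2 - arctan y < m * (pi / 2 - arctan (t + \<epsilon>)) / real k"
    using arctan_tail_bound by blast
  define s where "s = \<bar>y0\<bar> + \<epsilon>"
  define A where "A = diagm (\<lambda>i. if i \<in> K then - s else t)"
  \<comment> \<open>Here the order is reversed: \<open>t\<close> lifts \<open>A\<close> above level \<open>c\<close>, and \<open>s\<close>,
      chosen after \<open>t\<close>, keeps the \<open>\<epsilon>\<close>-neighbourhood of \<open>A\<close> below level \<open>\<theta>\<close>.\<close>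
  have "m * (pi / 2 - arctan t) < \<theta> - c"
    using y1[of t] \<open>1 \<le> m\<close> by (simp add: t_def pos_less_divide_eq mult.commute)
  moreover have "real k * arctan s < real k * (pi / 2)"
    using \<open>1 \<le> real k\<close> arctan_ubound[of s] by simp
  ultimately have "c \<le> Gfun A"
    using \<theta>_eq by (simp add: A_def Gfun_split_diagm[OF K] m_def algebra_simps)
  hence "(0, A) \<in> Gfun_superlevel c"
    by (simp add: Gfun_superlevel_def A_def symmetric_mat_diagm)
  moreover have "(0, A) \<notin> nbhd \<epsilon> (Gfun_superlevel \<theta>)"
  proof (rule not_in_nbhd_Gfun_superlevel)
    fix B :: "real^'n^'n"
    assume "symmetric_mat B" "\<And>i. i < CARD('n) \<Longrightarrow> \<bar>eigvals (A - B) ! i\<bar> < \<epsilon>"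
    hence "Gfun B \<le> m * arctan (t + \<epsilon>) - real k * arctan (s - \<epsilon>)"
      unfolding m_def using assms(3)
      by (intro Gfun_le_near_split_diagm[OF K]) (auto simp: A_def s_def t_def)
    moreover have "real k * (pi / 2 - arctan (s - \<epsilon>)) < m * (pi / 2 - arctan (t + \<epsilon>))"
      using y0[of "s - \<epsilon>"] \<open>1 \<le> real k\<close> by (simp add: s_def pos_less_divide_eq mult.commute)
    ultimately show "Gfun B < \<theta>" using \<theta>_eq by (simp add: algebra_simps)
  qed
  ultimately show ?thesis unfolding \<theta>_def by blast
qed

lemma hdist_eq_infinity_if_not_subset_nbhd:
  assumes "\<And>\<epsilon>. 0 < \<epsilon> \<Longrightarrow> \<not> \<Phi> \<subseteq> nbhd \<epsilon> \<Psi> \<or> \<not> \<Psi> \<subseteq> nbhd \<epsilon> \<Phi>"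
  shows "hdist \<Phi> \<Psi> = \<infinity>"
proof -
  have "{ereal \<epsilon> |\<epsilon>. 0 < \<epsilon> \<and> \<Phi> \<subseteq> nbhd \<epsilon> \<Psi> \<and> \<Psi> \<subseteq> nbhd \<epsilon> \<Phi>} = {}" (is "?E = {}")
    using assms by blast
  thus ?thesis unfolding hdist_def \<open>?E = {}\<close> by (simp add: top_ereal_def)
qed

lemma hdist_Gfun_superlevel_eq_infinity:
  assumes "0 < k" "k < CARD('n)" "c \<noteq> (real CARD('n) - 2 * real k) * pi / 2"
  shows "hdist (Gfun_superlevel ((real CARD('n) - 2 * real k) * pi / 2))
    (Gfun_superlevel c :: (real \<times> (real^'n^'n)) set) = \<infinity>"
proof (rule hdist_eq_infinity_if_not_subset_nbhd)
  fix \<epsilon> :: real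
  assume "0 < \<epsilon>"
  from assms(3) consider "c < (real CARD('n) - 2 * real k) * pi / 2"
    | "(real CARD('n) - 2 * real k) * pi / 2 < c"
    by linarith
  thus "\<not> Gfun_superlevel ((real CARD('n) - 2 * real k) * pi / 2) \<subseteq>
      nbhd \<epsilon> (Gfun_superlevel c :: (real \<times> (real^'n^'n)) set) \<or>
    \<not> (Gfun_superlevel c :: (real \<times> (real^'n^'n)) set) \<subseteq>
      nbhd \<epsilon> (Gfun_superlevel ((real CARD('n) - 2 * real k) * pi / 2))"
  proof cases
    case 1
    show ?thesis by (rule disjI2, rule Gfun_superlevel_not_subset_nbhd_below[OF assms(1,2) \<open>0 < \<epsilon>\<close> 1])
  next
    case 2
    show ?thesis by (rule disjI1, rule Gfun_superlevel_not_subset_nbhd_above[OF assms(1,2) \<open>0 < \<epsilon>\<close> 2])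
  qed
qed

lemma not_hausdorff_continuous_on_if_hdist_infinite:
  assumes "x0 \<in> \<Omega>" "\<And>n. xs n \<in> \<Omega>" "xs \<longlonglongrightarrow> x0"
    and "\<And>n. hdist (\<Theta> x0) (\<Theta> (xs n)) = \<infinity>"
  shows "\<not> hausdorff_continuous_on \<Omega> \<Theta>"
proof
  assume "hausdorff_continuous_on \<Omega> \<Theta>"
  then obtain \<delta> where "0 < \<delta>"
    and \<delta>: "\<And>y. y \<in> \<Omega> \<Longrightarrow> norm (x0 - y) < \<delta> \<Longrightarrow> hdist (\<Theta> x0) (\<Theta> y) < ereal 1"
    using assms(1) unfolding hausdorff_continuous_on_def by (meson zero_less_one)
  obtain n where "dist (xs n) x0 < \<delta>"
    using tendstoD[OF assms(3) \<open>0 < \<delta>\<close>] by (auto simp: eventually_sequentially)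
  hence "hdist (\<Theta> x0) (\<Theta> (xs n)) < ereal 1"
    by (intro \<delta> assms(2)) (simp add: dist_norm norm_minus_commute)
  with assms(4)[of n] show False by simp
qed

theorem proposition6p17:
  fixes \<Omega> :: "(real^'n) set" and h :: "real^'n \<Rightarrow> real"
    and k :: nat and xs :: "nat \<Rightarrow> real^'n" and x0 :: "real^'n"
  assumes "bounded \<Omega>" and "open \<Omega>" and "connected \<Omega>"
    and "continuous_on \<Omega> h"
    and "1 \<le> k" and "k \<le> CARD('n) - 1"
    and "\<And>n. xs n \<in> \<Omega>" and "xs \<longlonglongrightarrow> x0" and "x0 \<in> \<Omega>"
    and "h x0 = (real CARD('n) - 2 * real k) * pi / 2"
    and "(\<forall>n. h (xs n) > (real CARD('n) - 2 * real k) * pi / 2) \<or>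
         (\<forall>n. h (xs n) < (real CARD('n) - 2 * real k) * pi / 2)"
  shows "\<not> hausdorff_continuous_on \<Omega> (Theta h :: real^'n \<Rightarrow> (real \<times> (real^'n^'n)) set)"
proof (rule not_hausdorff_continuous_on_if_hdist_infinite[OF assms(9,7,8)])
  fix n
  have "0 < k" "k < CARD('n)" using assms(5,6) by auto
  moreover have "h (xs n) \<noteq> (real CARD('n) - 2 * real k) * pi / 2" using assms(11) by (metis order_less_irrefl)
  ultimately show "hdist (Theta h x0) (Theta h (xs n) :: (real \<times> (real^'n^'n)) set) = \<infinity>"
    unfolding Theta_eq_Gfun_superlevel assms(10) by (rule hdist_Gfun_superlevel_eq_infinity)
qed

end
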